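(* For every $n\ge 3$, the sun $S_n$ is not $(a,d)$-distance antimagic for any integers $a$ and $d\ge 0$.
   Context: The sun $S_n$ ($n\ge3$) is the graph on $2n$ vertices obtained from a cycle $x_1x_2\cdots x_n x_1$ by attaching a new pendant vertex $y_i$ adjacent only to $x_i$, for each $i=1,\dots,n$. For a graph $G=(V,E)$ with $v=|V|$ and a bijection $f:V\to\{1,\dots,v\}$, the vertex-weight of $x$ is $w(x)=\sum_{y\in N(x)}f(y)$ with $N(x)$ the set of neighbours of $x$. For integers $a$ and $d\ge0$, $f$ is an $(a,d)$-distance antimagic labeling if the multiset of vertex-weights equals $\{a,a+d,\dots,a+(v-1)d\}$; $G$ is $(a,d)$-distance antimagic if it admits such a labeling. *)

theory Defs
  imports Main "HOL-Library.Multiset"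
begin

text \<open>Graphs given by a finite vertex set V and a symmetric adjacency relation E.\<close>

definition nbhd :: "'a set \<Rightarrow> ('a \<Rightarrow> 'a \<Rightarrow> bool) \<Rightarrow> 'a \<Rightarrow> 'a set" where
  "nbhd V E x = {y \<in> V. E x y}"

definition vertex_weight :: "'a set \<Rightarrow> ('a \<Rightarrow> 'a \<Rightarrow> bool) \<Rightarrow> ('a \<Rightarrow> int) \<Rightarrow> 'a \<Rightarrow> int" where
  "vertex_weight V E f x = (\<Sum>y\<in>nbhd V E x. f y)"

definition distance_antimagic_labeling ::
  "'a set \<Rightarrow> ('a \<Rightarrow> 'a \<Rightarrow> bool) \<Rightarrow> int \<Rightarrow> int \<Rightarrow> ('a \<Rightarrow> int) \<Rightarrow> bool" where
  "distance_antimagic_labeling V E a d f \<longleftrightarrow>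
     bij_betw f V {1..int (card V)} \<and>
     image_mset (vertex_weight V E f) (mset_set V) =
       mset (map (\<lambda>i. a + int i * d) [0..<card V])"

definition distance_antimagic :: "'a set \<Rightarrow> ('a \<Rightarrow> 'a \<Rightarrow> bool) \<Rightarrow> int \<Rightarrow> int \<Rightarrow> bool" where
  "distance_antimagic V E a d \<longleftrightarrow> (\<exists>f. distance_antimagic_labeling V E a d f)"

text \<open>The sun S_n: cycle vertices X 0 .. X (n-1) (i.e. x_1..x_n), pendant vertices Y i adjacent to X i.\<close>

datatype sun_vertex = X nat | Y nat

definition sun_V :: "nat \<Rightarrow> sun_vertex set" where
  "sun_V n = X ` {..<n} \<union> Y ` {..<n}"

fun sun_E :: "nat \<Rightarrow> sun_vertex \<Rightarrow> sun_vertex \<Rightarrow> bool" where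
  "sun_E n (X i) (X j) \<longleftrightarrow> i < n \<and> j < n \<and> (j = (i + 1) mod n \<or> i = (j + 1) mod n)"
| "sun_E n (X i) (Y j) \<longleftrightarrow> i < n \<and> i = j"
| "sun_E n (Y i) (X j) \<longleftrightarrow> i < n \<and> i = j"
| "sun_E n (Y i) (Y j) \<longleftrightarrow> False"

end

theory Submission
  imports Defs
begin

text \<open>The weight of the pendant vertex \<open>y\<^sub>i\<close> is the label of \<open>x\<^sub>i\<close>, so the \<open>n\<close> cycle labels
  are \<open>n\<close> distinct terms of the progression \<open>a + k d\<close> inside \<open>{1..2n}\<close>. Hence \<open>d > 0\<close>, and
  they spread over at least \<open>(n - 1) d\<close>, so \<open>(n - 1) d \<le> 2n - 1\<close>. Counting each label once per
  neighbour, the total weight is \<open>3 \<Sigma>x + \<Sigma>y = 2 \<Sigma>x + n(2n + 1)\<close>, which must equal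
  \<open>2na + n(2n - 1) d\<close>; since \<open>2 \<Sigma>x \<ge> 2na + n(n - 1) d\<close>, this forces \<open>2n + 1 \<le> d n\<close>, i.e.
  \<open>d \<ge> 3\<close>, which contradicts \<open>(n - 1) d \<le> 2n - 1\<close> for \<open>n \<ge> 3\<close>.\<close>

lemma card_le_Suc_Max_minus_Min:
  fixes K :: "nat set"
  assumes "finite K" "K \<noteq> {}"
  shows "card K \<le> Suc (Max K - Min K)"
proof -
  have "K \<subseteq> {Min K..Max K}" using assms by auto
  then have "card K \<le> card {Min K..Max K}" by (intro card_mono) simp_all
  then show ?thesis by simp
qed

lemma card_mult_pred_le_double_sum:
  fixes K :: "nat set"
  assumes "finite K"
  shows "card K * (card K - 1) \<le> 2 * \<Sum>K"
  using assms
proof (induction "card K" arbitrary: K)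
  case 0
  then show ?case by simp
next
  case (Suc c)
  define m where "m = Max K"
  have "K \<noteq> {}" using Suc.hyps(2) by auto
  then have m: "m \<in> K" using Suc.prems m_def by simp
  have card_rest: "card (K - {m}) = c" using Suc.hyps(2) m by simp
  have "c \<le> m"
    using card_le_Suc_Max[OF Suc.prems] Suc.hyps(2) m_def by simp
  moreover have "c * (c - 1) \<le> 2 * \<Sum>(K - {m})"
    using Suc.hyps(1)[of "K - {m}"] card_rest Suc.prems by simp
  moreover have "\<Sum>K = m + \<Sum>(K - {m})"
    using Suc.prems m by (simp add: sum.remove)
  moreover have "card K * (card K - 1) = c * (c - 1) + 2 * c"
    by (simp add: Suc.hyps(2)[symmetric]) (cases c; simp)
  ultimately show ?case by linarith
qed

lemma double_sum_progression:
  "2 * (\<Sum>k<m. a + int k * d) = 2 * int m * a + d * int m * (int m - 1)"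
  by (induction m) (auto simp: algebra_simps)

lemma subset_progression_preimage:
  fixes L :: "int set"
  assumes "finite L" "d > 0" "L \<subseteq> range (\<lambda>k. a + int k * d)"
  obtains K where "finite K" "L = (\<lambda>k. a + int k * d) ` K" "card K = card L"
    "inj_on (\<lambda>k. a + int k * d) K"
proof
  have inj: "inj (\<lambda>k. a + int k * d)" using assms(2) by (intro injI) simp
  define K where "K = (\<lambda>k. a + int k * d) -` L"
  show "finite K" unfolding K_def using assms(1) inj by (rule finite_vimageI)
  show L: "L = (\<lambda>k. a + int k * d) ` K" using assms(3) unfolding K_def by auto
  show "inj_on (\<lambda>k. a + int k * d) K" using inj by (rule inj_on_subset) simp
  then show "card K = card L" by (subst L) (simp add: card_image)
qed

lemma double_sum_subset_progression_ge:
  fixes L :: "int set"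
  assumes "finite L" "d > 0" "L \<subseteq> range (\<lambda>k. a + int k * d)"
  shows "2 * int (card L) * a + d * int (card L) * (int (card L) - 1) \<le> 2 * \<Sum>L"
proof -
  obtain K where K: "finite K" "L = (\<lambda>k. a + int k * d) ` K" "card K = card L"
    "inj_on (\<lambda>k. a + int k * d) K"
    using subset_progression_preimage[OF assms] .
  have "\<Sum>L = (\<Sum>k\<in>K. a + int k * d)" using K(2,4) by (simp add: sum.reindex)
  also have "\<dots> = int (card L) * a + d * int (\<Sum>K)"
    using K(3) by (simp add: sum.distrib sum_distrib_left mult.commute)
  finally have sum_L: "\<Sum>L = int (card L) * a + d * int (\<Sum>K)" .
  have "int (card L) * (int (card L) - 1) = int (card L * (card L - 1))"
    by (cases "card L") (simp_all add: algebra_simps)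
  also have "\<dots> \<le> 2 * int (\<Sum>K)"
    unfolding K(3)[symmetric] using card_mult_pred_le_double_sum[OF K(1)]
    by (metis of_nat_le_iff of_nat_mult of_nat_numeral)
  finally have "int (card L) * (int (card L) - 1) \<le> 2 * int (\<Sum>K)" .
  then have "d * (int (card L) * (int (card L) - 1)) \<le> d * (2 * int (\<Sum>K))"
    using assms(2) by (intro mult_left_mono) simp_all
  then show ?thesis unfolding sum_L by (simp add: algebra_simps)
qed

lemma spread_subset_progression_le:
  fixes L :: "int set"
  assumes "finite L" "d > 0" "L \<subseteq> range (\<lambda>k. a + int k * d)" "L \<subseteq> {lo..hi}" "L \<noteq> {}"
  shows "(int (card L) - 1) * d \<le> hi - lo"
proof -
  obtain K where K: "finite K" "L = (\<lambda>k. a + int k * d) ` K" "card K = card L"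
    "inj_on (\<lambda>k. a + int k * d) K"
    using subset_progression_preimage[OF assms(1-3)] .
  have "K \<noteq> {}" using K(2) assms(5) by auto
  then have "Min K \<in> K" "Max K \<in> K" using K(1) by simp_all
  then have "lo \<le> a + int (Min K) * d" "a + int (Max K) * d \<le> hi"
    using K(2) assms(4) by fastforce+
  moreover have "int (card L) - 1 \<le> int (Max K) - int (Min K)"
    using card_le_Suc_Max_minus_Min[OF K(1) \<open>K \<noteq> {}\<close>] K(3)
      Min_le[OF K(1) \<open>Max K \<in> K\<close>] by linarith
  then have "(int (card L) - 1) * d \<le> (int (Max K) - int (Min K)) * d"
    using assms(2) by (intro mult_right_mono) simp_all
  ultimately show ?thesis by (simp add: algebra_simps)
qed

lemma sum_vertex_weight_eq_sum_label_degree: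
  assumes "finite V" "symp E"
  shows "(\<Sum>x\<in>V. vertex_weight V E f x) = (\<Sum>y\<in>V. f y * int (card (nbhd V E y)))"
proof -
  have "(\<Sum>x\<in>V. vertex_weight V E f x) = (\<Sum>y\<in>V. \<Sum>x\<in>{x \<in> V. E x y}. f y)"
    unfolding vertex_weight_def nbhd_def by (rule sum.swap_restrict[OF assms(1,1)])
  also have "\<dots> = (\<Sum>y\<in>V. f y * int (card (nbhd V E y)))"
  proof (rule sum.cong[OF refl])
    fix y
    have "{x \<in> V. E x y} = nbhd V E y"
      unfolding nbhd_def using assms(2) by (auto dest: sympD)
    then show "(\<Sum>x\<in>{x \<in> V. E x y}. f y) = f y * int (card (nbhd V E y))" by simp
  qed
  finally show ?thesis .
qed

lemma double_sum_distance_antimagic_weights: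
  assumes "distance_antimagic_labeling V E a d f" "finite V"
  shows "2 * (\<Sum>x\<in>V. vertex_weight V E f x) = 2 * int (card V) * a + d * int (card V) * (int (card V) - 1)"
proof -
  have "(\<Sum>x\<in>V. vertex_weight V E f x) = sum_mset (image_mset (vertex_weight V E f) (mset_set V))"
    by (rule sum_unfold_sum_mset)
  also have "\<dots> = (\<Sum>k<card V. a + int k * d)"
    using assms(1) unfolding distance_antimagic_labeling_def
    by (simp add: sum_unfold_sum_mset atLeast0LessThan)
  finally show ?thesis using double_sum_progression by simp
qed

lemma double_sum_distance_antimagic_labels:
  assumes "distance_antimagic_labeling V E a d f"
  shows "2 * sum f V = int (card V) * (int (card V) + 1)"
proof -
  have "bij_betw f V {1..int (card V)}" using assms unfolding distance_antimagic_labeling_def by simp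
  then have "sum f V = \<Sum>{1..int (card V)}" by (simp add: sum.reindex_bij_betw[symmetric])
  also have "\<dots> = sum int {1..card V}"
  proof -
    have "{1..int (card V)} = int ` {1..card V}" by (simp add: image_int_atLeastAtMost)
    then show ?thesis by (simp add: sum.reindex)
  qed
  finally show ?thesis using double_gauss_sum_from_Suc_0[where 'a = int] by simp
qed

lemma distance_antimagic_weight_in_progression:
  assumes "distance_antimagic_labeling V E a d f" "finite V" "x \<in> V"
  shows "vertex_weight V E f x \<in> range (\<lambda>k. a + int k * d)"
proof -
  have "vertex_weight V E f x \<in># image_mset (vertex_weight V E f) (mset_set V)"
    using assms(2,3) by simp
  then show ?thesis using assms(1) unfolding distance_antimagic_labeling_def by auto
qed

lemma succ_mod_eq_iff_pred_mod:
  fixes i j n :: nat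
  assumes "i < n" "j < n"
  shows "i = (j + 1) mod n \<longleftrightarrow> j = (i + n - 1) mod n"
proof (cases "i = 0")
  case True
  then show ?thesis using assms by (auto simp: mod_Suc split: if_splits)
next
  case False
  then have "(i + n - 1) mod n = i - 1" using assms by (simp add: mod_if)
  then show ?thesis using assms False by (auto simp: mod_Suc split: if_splits)
qed

lemma finite_sun_V: "finite (sun_V n)"
  by (simp add: sun_V_def)

lemma sum_sun_V: "sum g (sun_V n) = (\<Sum>i<n. g (X i)) + (\<Sum>i<n. g (Y i))"
  unfolding sun_V_def by (subst sum.union_disjoint) (auto simp: sum.reindex inj_on_def)

lemma card_sun_V: "card (sun_V n) = 2 * n"
  using sum_sun_V[of "\<lambda>_. 1 :: nat" n] by simp

lemma symp_sun_E: "symp (sun_E n)"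
proof (rule sympI)
  fix u v
  show "sun_E n u v \<Longrightarrow> sun_E n v u" by (cases u; cases v) auto
qed

lemma nbhd_sun_Y: "i < n \<Longrightarrow> nbhd (sun_V n) (sun_E n) (Y i) = {X i}"
  unfolding nbhd_def sun_V_def by (auto elim: sun_E.elims)

lemma nbhd_sun_X:
  assumes "i < n"
  shows "nbhd (sun_V n) (sun_E n) (X i) = {X ((i + 1) mod n), X ((i + n - 1) mod n), Y i}"
proof (rule set_eqI)
  fix v
  show "v \<in> nbhd (sun_V n) (sun_E n) (X i) \<longleftrightarrow> v \<in> {X ((i + 1) mod n), X ((i + n - 1) mod n), Y i}"
  proof (cases v)
    case (X j)
    have "(i + n - 1) mod n < n" using assms by simp
    then show ?thesis
      unfolding nbhd_def sun_V_def X using assms succ_mod_eq_iff_pred_mod[OF assms, of j] by auto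
  qed (auto simp: nbhd_def sun_V_def assms)
qed

lemma card_nbhd_sun_X:
  assumes "3 \<le> n" "i < n"
  shows "card (nbhd (sun_V n) (sun_E n) (X i)) = 3"
proof -
  have "(i + 1) mod n \<noteq> (i + n - 1) mod n"
    using assms by (auto simp: mod_if)
  then show ?thesis unfolding nbhd_sun_X[OF assms(2)] by simp
qed

lemma sum_vertex_weight_sun:
  assumes "3 \<le> n"
  shows "(\<Sum>v\<in>sun_V n. vertex_weight (sun_V n) (sun_E n) f v)
    = 3 * (\<Sum>i<n. f (X i)) + (\<Sum>i<n. f (Y i))"
proof -
  have "(\<Sum>v\<in>sun_V n. vertex_weight (sun_V n) (sun_E n) f v)
      = (\<Sum>v\<in>sun_V n. f v * int (card (nbhd (sun_V n) (sun_E n) v)))"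
    by (rule sum_vertex_weight_eq_sum_label_degree[OF finite_sun_V symp_sun_E])
  also have "\<dots> = 3 * (\<Sum>i<n. f (X i)) + (\<Sum>i<n. f (Y i))"
    using assms by (simp add: sum_sun_V card_nbhd_sun_X nbhd_sun_Y sum_distrib_left mult.commute)
  finally show ?thesis .
qed

lemma double_sum_cycle_labels_sun:
  assumes "distance_antimagic_labeling (sun_V n) (sun_E n) a d f" "3 \<le> n"
  shows "2 * (\<Sum>i<n. f (X i)) + int n * (2 * int n + 1)
    = 2 * int n * a + d * int n * (2 * int n - 1)"
proof -
  have "2 * (3 * (\<Sum>i<n. f (X i)) + (\<Sum>i<n. f (Y i)))
      = 2 * int (2 * n) * a + d * int (2 * n) * (int (2 * n) - 1)"
    using double_sum_distance_antimagic_weights[OF assms(1) finite_sun_V]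
    by (simp only: sum_vertex_weight_sun[OF assms(2)] card_sun_V)
  moreover have "2 * ((\<Sum>i<n. f (X i)) + (\<Sum>i<n. f (Y i))) = int (2 * n) * (int (2 * n) + 1)"
    using double_sum_distance_antimagic_labels[OF assms(1)] by (simp only: sum_sun_V card_sun_V)
  ultimately show ?thesis by (simp add: algebra_simps)
qed

lemma cycle_labels_sun:
  assumes "distance_antimagic_labeling (sun_V n) (sun_E n) a d f"
  defines "L \<equiv> f ` X ` {..<n}"
  shows "card L = n" and "L \<subseteq> {1..2 * int n}" and "L \<subseteq> range (\<lambda>k. a + int k * d)"
    and "\<Sum>L = (\<Sum>i<n. f (X i))"
proof -
  have X_sub: "X ` {..<n} \<subseteq> sun_V n" by (simp add: sun_V_def)
  have bij: "bij_betw f (sun_V n) {1..2 * int n}"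
    using assms(1) unfolding distance_antimagic_labeling_def card_sun_V by simp
  have inj: "inj_on f (X ` {..<n})"
    using bij_betw_imp_inj_on[OF bij] X_sub by (rule inj_on_subset)
  show "card L = n" unfolding L_def using inj by (simp add: card_image inj_on_def)
  show "L \<subseteq> {1..2 * int n}"
    unfolding L_def using bij_betw_imp_surj_on[OF bij] X_sub by blast
  show "L \<subseteq> range (\<lambda>k. a + int k * d)"
  proof
    fix l assume "l \<in> L"
    then obtain i where "i < n" "l = vertex_weight (sun_V n) (sun_E n) f (Y i)"
      unfolding L_def by (auto simp: vertex_weight_def nbhd_sun_Y)
    then show "l \<in> range (\<lambda>k. a + int k * d)"
      using distance_antimagic_weight_in_progression[OF assms(1) finite_sun_V] by (simp add: sun_V_def)
  qed
  show "\<Sum>L = (\<Sum>i<n. f (X i))"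
    unfolding L_def using inj by (simp add: sum.reindex inj_on_def)
qed

theorem mainTheorem7:
  fixes n :: nat and a d :: int
  assumes "n \<ge> 3" and "d \<ge> 0"
  shows "\<not> distance_antimagic (sun_V n) (sun_E n) a d"
proof
  assume "distance_antimagic (sun_V n) (sun_E n) a d"
  then obtain f where lab: "distance_antimagic_labeling (sun_V n) (sun_E n) a d f"
    unfolding distance_antimagic_def by blast
  define L where "L = f ` X ` {..<n}"
  note L = cycle_labels_sun[OF lab, folded L_def]
  have fin: "finite L" unfolding L_def by simp
  have ne: "L \<noteq> {}" using L(1) assms(1) by auto
  have "d \<noteq> 0"
  proof
    assume "d = 0"
    then have "card L \<le> card {a}" using L(3) by (intro card_mono) auto
    then show False using L(1) assms(1) by simp
  qed
  then have d_pos: "d > 0" using assms(2) by simp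
  have "int n * (2 * int n + 1) \<le> int n * (d * int n)"
    using double_sum_cycle_labels_sun[OF lab assms(1)] L(1,4)
      double_sum_subset_progression_ge[OF fin d_pos L(3)]
    by (simp add: algebra_simps)
  then have "2 * int n + 1 \<le> d * int n" using assms(1) by simp
  moreover have "d \<le> 2 \<Longrightarrow> d * int n \<le> 2 * int n" by (rule mult_right_mono) simp_all
  ultimately have "d \<ge> 3" by linarith
  then have "(int n - 1) * 3 \<le> (int n - 1) * d"
    using assms(1) by (intro mult_left_mono) simp_all
  moreover have "(int n - 1) * d \<le> 2 * int n - 1"
    using spread_subset_progression_le[OF fin d_pos L(3,2) ne] L(1) by simp
  ultimately show False using assms(1) by (simp add: algebra_simps)
qed

end
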